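(* Let $\mathcal{D}$ be a finite set of disks in the plane, and let $(C_1,C_2)$ be a pair of congruent disks of smallest possible common radius such that every $D\in\mathcal{D}$ intersects $C_1$ or $C_2$. Assume the centers of $C_1$ and $C_2$ are distinct and let $\ell$ be the perpendicular bisector of the segment connecting them. Then for $i\in\{1,2\}$, $C_i\cap D\neq\emptyset$ for every $D\in\mathcal{D}$ whose center lies on the same (closed) side of $\ell$ as the center of $C_i$.
   Context: Disks are closed disks in the plane. The paper assumes throughout that no disk of $\mathcal{D}$ contains another disk of $\mathcal{D}$. *)

theory Defs
  imports "HOL-Analysis.Analysis"
begin

text \<open>The plane is modelled as the complex numbers. A disk is given by a pair
  (center, radius); the disk itself is the closed ball.\<close>

type_synonym disk = "complex \<times> real"

definition disk_set :: "disk \<Rightarrow> complex set" where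
  "disk_set D = cball (fst D) (snd D)"

text \<open>Standing assumptions of the paper: a finite family of (proper) disks,
  none containing another.\<close>
definition valid_family :: "disk set \<Rightarrow> bool" where
  "valid_family \<D> \<longleftrightarrow> finite \<D> \<and> (\<forall>D\<in>\<D>. snd D > 0) \<and>
     (\<forall>D\<in>\<D>. \<forall>D'\<in>\<D>. D \<noteq> D' \<longrightarrow> \<not> disk_set D \<subseteq> disk_set D')"

definition two_pierce :: "disk set \<Rightarrow> complex \<Rightarrow> complex \<Rightarrow> real \<Rightarrow> bool" where
  "two_pierce \<D> c1 c2 r \<longleftrightarrow> r \<ge> 0 \<and>
     (\<forall>D\<in>\<D>. cball c1 r \<inter> disk_set D \<noteq> {} \<or> cball c2 r \<inter> disk_set D \<noteq> {})"

end

theory Submission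
  imports Defs
begin

text \<open>Two closed disks meet iff their centers are at most the sum of the radii apart.\<close>

lemma cball_Int_cball_nonempty:
  fixes c p :: "'a::real_normed_vector"
  assumes "r \<ge> 0" "s \<ge> 0" "dist p c \<le> r + s"
  shows "cball c r \<inter> cball p s \<noteq> {}"
proof (cases "dist p c \<le> r")
  case True
  then have "p \<in> cball c r \<inter> cball p s"
    using assms by (simp add: dist_commute)
  then show ?thesis by blast
next
  case False
  define d where "d = dist p c"
  have "d > r" "d > 0"
    using False assms(1) by (auto simp: d_def)
  have norm_pc: "norm (p - c) = d"
    by (simp add: d_def dist_norm)
  \<comment> \<open>the point of the segment from \<open>c\<close> to \<open>p\<close> at distance \<open>r\<close> from \<open>c\<close>\<close>
  define x where "x = c + (r / d) *\<^sub>R (p - c)"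
  have "dist c x = r"
    using \<open>d > 0\<close> norm_pc assms(1) by (simp add: x_def dist_norm)
  moreover have "p - x = (1 - r / d) *\<^sub>R (p - c)"
    by (simp add: x_def algebra_simps)
  then have "dist p x = d - r"
    using \<open>d > r\<close> \<open>d > 0\<close> norm_pc by (simp add: dist_norm left_diff_distrib)
  ultimately have "x \<in> cball c r \<inter> cball p s"
    using assms(3) by (simp add: d_def)
  then show ?thesis by blast
qed

lemma cball_Int_cball_nonempty_iff:
  fixes c p :: "'a::real_normed_vector"
  assumes "r \<ge> 0" "s \<ge> 0"
  shows "cball c r \<inter> cball p s \<noteq> {} \<longleftrightarrow> dist p c \<le> r + s"
  using cball_Int_cball_nonempty[OF assms] disjoint_cballI[of r s c p]
  by (force simp: dist_commute)

lemma cball_hits_nearer_center: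
  fixes c1 c2 p :: "'a::real_normed_vector"
  assumes "r \<ge> 0" "s \<ge> 0" "dist p c1 \<le> dist p c2"
    and "cball c1 r \<inter> cball p s \<noteq> {} \<or> cball c2 r \<inter> cball p s \<noteq> {}"
  shows "cball c1 r \<inter> cball p s \<noteq> {}"
  using assms by (auto simp: cball_Int_cball_nonempty_iff)

lemma two_pierce_hits_nearer_center:
  assumes "valid_family \<D>" "two_pierce \<D> c1 c2 r" "D \<in> \<D>"
    and "dist (fst D) c1 \<le> dist (fst D) c2"
  shows "cball c1 r \<inter> disk_set D \<noteq> {}"
proof -
  have "snd D \<ge> 0"
    using assms(1,3) by (auto simp: valid_family_def)
  with assms show ?thesis
    unfolding two_pierce_def disk_set_def
    by (intro cball_hits_nearer_center) auto
qed

lemma two_pierce_commute: "two_pierce \<D> c1 c2 r \<longleftrightarrow> two_pierce \<D> c2 c1 r"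
  by (auto simp: two_pierce_def)

theorem mainTheorem13:
  fixes \<D> :: "disk set" and c1 c2 :: complex and r :: real
  assumes "valid_family \<D>"
    and "two_pierce \<D> c1 c2 r"
    and "\<And>c1' c2' r'. two_pierce \<D> c1' c2' r' \<Longrightarrow> r \<le> r'"
    and "c1 \<noteq> c2"
  shows "(\<forall>D\<in>\<D>. dist (fst D) c1 \<le> dist (fst D) c2 \<longrightarrow> cball c1 r \<inter> disk_set D \<noteq> {}) \<and>
         (\<forall>D\<in>\<D>. dist (fst D) c2 \<le> dist (fst D) c1 \<longrightarrow> cball c2 r \<inter> disk_set D \<noteq> {})"
proof -
  have "two_pierce \<D> c2 c1 r"
    using assms(2) by (simp add: two_pierce_commute)
  then show ?thesis
    using two_pierce_hits_nearer_center[OF assms(1)] assms(2) by blast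
qed

end
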